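(* Let $\tilde n\ge 1$, and let $\mathbf{S}_{i^*},\mathbf{S}_{2}\in\mathbb{R}^{\tilde n\times\tilde n}$ be two real matrices (the graph matrix of the reference view and the graph matrix of the view to be aligned). Let $\boldsymbol{\Delta}=\{\mathbf{P}\in[0,1]^{\tilde n\times\tilde n}:\ \mathbf{P}\mathbf{1}=\mathbf{1},\ \mathbf{P}^{\top}\mathbf{1}=\mathbf{1}\}$ be the set of doubly stochastic matrices, and let $\boldsymbol{\Gamma}:\mathbb{R}^{\tilde n\times\tilde n}\to\boldsymbol{\Delta}$ be the Euclidean (Frobenius-norm) projection onto $\boldsymbol{\Delta}$. Starting from any $\mathbf{P}^{(0)}\in\boldsymbol{\Delta}$, define the iterates $$\mathbf{P}^{(t+1)}=\tfrac12\Big(\mathbf{P}^{(t)}+\boldsymbol{\Gamma}\big(\mathbf{S}_{2}\,\mathbf{P}^{(t)}\,\mathbf{S}_{i^*}^{\top}\big)\Big),\qquad t=0,1,2,\dots$$ Suppose there is a constant $\varepsilon\ge 0$ such that $\|\mathbf{S}_{i^*}\otimes\mathbf{S}_{2}\|_2\le\varepsilon$, where $\otimes$ is the Kronecker product and $\|\cdot\|_2$ the spectral norm. Then the iteration converges at rate $\tfrac12+\varepsilon$, i.e. for every $t\ge1$, $$\|\mathbf{P}^{(t+1)}-\mathbf{P}^{(t)}\|_F\le\Big(\tfrac12+\varepsilon\Big)\|\mathbf{P}^{(t)}-\mathbf{P}^{(t-1)}\|_F .$$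
   Context: This iteration is a projected fixed-point scheme for the relaxed graph-matching problem $\max_{\mathbf{P}\in\boldsymbol{\Delta}}\operatorname{Tr}(\mathbf{S}_{i^*}^{\top}\mathbf{P}^{\top}\mathbf{S}_{2}\mathbf{P})$, whose gradient (up to a constant) is $\mathbf{S}_{2}\mathbf{P}\mathbf{S}_{i^*}^{\top}$. $\|\cdot\|_F$ denotes the Frobenius norm. *)

theory Defs
  imports "HOL-Analysis.Analysis"
begin

text \<open>Matrices are elements of real^'n^'n (row index outer). The library norm on
this type is the Frobenius norm (Euclidean norm of all entries).\<close>

definition doubly_stochastic :: "(real^'n^'n) set" where
  "doubly_stochastic = {P. (\<forall>i j. 0 \<le> P$i$j \<and> P$i$j \<le> 1)
      \<and> (\<forall>i. (\<Sum>j\<in>UNIV. P$i$j) = 1) \<and> (\<forall>j. (\<Sum>i\<in>UNIV. P$i$j) = 1)}"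

definition proj_ds :: "real^'n^'n \<Rightarrow> real^'n^'n" where
  "proj_ds X = closest_point doubly_stochastic X"

definition kron :: "real^'n^'m \<Rightarrow> real^'q^'p \<Rightarrow> real^('n \<times> 'q)^('m \<times> 'p)" where
  "kron A B = (\<chi> r. \<chi> c. A$(fst r)$(fst c) * B$(snd r)$(snd c))"

definition spec_norm :: "real^'n^'m \<Rightarrow> real" where
  "spec_norm M = onorm (\<lambda>x. M *v x)"

end

theory Submission
  imports Defs
begin

text \<open>The projection onto the closed convex set of doubly stochastic matrices is 1-Lipschitz
for the Frobenius norm. Under vectorisation, \<open>X \<mapsto> S\<^sub>2 X S\<^sub>1\<^sup>T\<close> becomes multiplication by
\<open>S\<^sub>1 \<otimes> S\<^sub>2\<close>, so it is \<open>\<epsilon>\<close>-Lipschitz. Hence the gradient step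
\<open>X \<mapsto> \<Gamma>(S\<^sub>2 X S\<^sub>1\<^sup>T)\<close> is \<open>\<epsilon>\<close>-Lipschitz and its average with the identity is
\<open>(1 + \<epsilon>)/2\<close>-Lipschitz, which is at most \<open>1/2 + \<epsilon>\<close>.\<close>

lemma closed_doubly_stochastic: "closed (doubly_stochastic :: (real^'n^'n) set)"
  unfolding doubly_stochastic_def
  by (intro closed_Collect_conj closed_Collect_all closed_Collect_le closed_Collect_eq
      continuous_intros)

lemma convex_doubly_stochastic: "convex (doubly_stochastic :: (real^'n^'n) set)"
proof (rule convexI)
  fix x y :: "real^'n^'n" and u v :: real
  assume "x \<in> doubly_stochastic" "y \<in> doubly_stochastic" and uv: "0 \<le> u" "0 \<le> v" "u + v = 1"
  then have x: "\<And>i j. 0 \<le> x$i$j" "\<And>i j. x$i$j \<le> 1"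
      "\<And>i. (\<Sum>j\<in>UNIV. x$i$j) = 1" "\<And>j. (\<Sum>i\<in>UNIV. x$i$j) = 1"
    and y: "\<And>i j. 0 \<le> y$i$j" "\<And>i j. y$i$j \<le> 1"
      "\<And>i. (\<Sum>j\<in>UNIV. y$i$j) = 1" "\<And>j. (\<Sum>i\<in>UNIV. y$i$j) = 1"
    unfolding doubly_stochastic_def by auto
  have "u * x$i$j + v * y$i$j \<le> u * 1 + v * 1" for i j
    using x y uv by (intro add_mono mult_left_mono) auto
  with x y uv show "u *\<^sub>R x + v *\<^sub>R y \<in> doubly_stochastic"
    unfolding doubly_stochastic_def by (simp add: sum.distrib sum_distrib_left[symmetric])
qed

lemma doubly_stochastic_nonempty: "(doubly_stochastic :: (real^'n^'n) set) \<noteq> {}"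
proof -
  have "(\<chi> i j. 1 / real CARD('n)) \<in> (doubly_stochastic :: (real^'n^'n) set)"
    unfolding doubly_stochastic_def by (simp add: divide_le_eq)
  then show ?thesis by blast
qed

lemma proj_ds_lipschitz: "norm (proj_ds X - proj_ds Y) \<le> norm (X - Y)"
  using closest_point_lipschitz[OF convex_doubly_stochastic closed_doubly_stochastic
      doubly_stochastic_nonempty]
  unfolding proj_ds_def dist_norm .

text \<open>Column-stacking vectorisation; the index \<open>(j, i)\<close> refers to entry \<open>i\<close> of column \<open>j\<close>,
matching the pair indexing of \<^const>\<open>kron\<close>.\<close>

definition vectorize :: "real^'n^'m \<Rightarrow> real^('n \<times> 'm)" where
  "vectorize M = (\<chi> r. M $ snd r $ fst r)"

lemma norm_vectorize: "norm (vectorize M) = norm M"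
proof -
  have "(\<Sum>r\<in>UNIV. vectorize M $ r * vectorize M $ r) = (\<Sum>j\<in>UNIV. \<Sum>i\<in>UNIV. M$i$j * M$i$j)"
    unfolding vectorize_def UNIV_Times_UNIV[symmetric] sum.cartesian_product
    by (simp add: split_beta)
  also have "\<dots> = (\<Sum>i\<in>UNIV. \<Sum>j\<in>UNIV. M$i$j * M$i$j)"
    by (rule sum.swap)
  finally have "norm (vectorize M) ^ 2 = norm M ^ 2"
    unfolding power2_norm_eq_inner inner_vec_def by simp
  then show ?thesis
    by (simp add: power2_eq_iff_nonneg)
qed

lemma kron_mult_vectorize: "kron A B *v vectorize X = vectorize (B ** X ** transpose A)"
proof -
  have "(kron A B *v vectorize X) $ (i, k) = vectorize (B ** X ** transpose A) $ (i, k)" for i k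
  proof -
    have "(kron A B *v vectorize X) $ (i, k) = (\<Sum>j\<in>UNIV. \<Sum>l\<in>UNIV. A$i$j * B$k$l * X$l$j)"
      unfolding kron_def vectorize_def matrix_vector_mult_def UNIV_Times_UNIV[symmetric]
        sum.cartesian_product
      by (simp add: split_beta)
    also have "\<dots> = (\<Sum>j\<in>UNIV. (\<Sum>l\<in>UNIV. B$k$l * X$l$j) * A$i$j)"
      by (simp add: sum_distrib_left mult.commute mult.left_commute)
    also have "\<dots> = vectorize (B ** X ** transpose A) $ (i, k)"
      unfolding vectorize_def matrix_matrix_mult_def transpose_def by simp
    finally show ?thesis .
  qed
  then show ?thesis
    by (simp add: vec_eq_iff)
qed

lemma norm_sandwich_le_spec_norm_kron:
  "norm (B ** X ** transpose A) \<le> spec_norm (kron A B) * norm X"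
proof -
  have "norm (kron A B *v vectorize X) \<le> spec_norm (kron A B) * norm (vectorize X)"
    unfolding spec_norm_def by (rule onorm) simp
  then show ?thesis
    by (simp add: kron_mult_vectorize norm_vectorize)
qed

lemma matrix_sandwich_diff:
  fixes A :: "'a::ring_1^'n^'m" and X Y :: "'a^'p^'n" and B :: "'a^'q^'p"
  shows "A ** X ** B - A ** Y ** B = A ** (X - Y) ** B"
  by (simp add: matrix_matrix_mult_def vec_eq_iff sum_subtractf algebra_simps)

lemma averaged_map_lipschitz:
  fixes f :: "'a::real_normed_vector \<Rightarrow> 'a"
  assumes "norm (f x - f y) \<le> L * norm (x - y)"
  shows "norm ((1/2) *\<^sub>R (x + f x) - (1/2) *\<^sub>R (y + f y)) \<le> (1 + L) / 2 * norm (x - y)"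
proof -
  have "(1/2) *\<^sub>R (x + f x) - (1/2) *\<^sub>R (y + f y) = (1/2) *\<^sub>R ((x - y) + (f x - f y))"
    by (simp add: algebra_simps)
  also have "norm \<dots> \<le> (1/2) * (norm (x - y) + norm (f x - f y))"
    using norm_triangle_ineq by simp
  also have "\<dots> \<le> (1 + L) / 2 * norm (x - y)"
    using assms by (simp add: field_simps)
  finally show ?thesis .
qed

theorem theorem1:
  fixes S1 S2 :: "real^'n^'n" and P :: "nat \<Rightarrow> real^'n^'n" and \<epsilon> :: real
  assumes "P 0 \<in> doubly_stochastic"
    and "\<And>t. P (Suc t) = (1/2) *\<^sub>R (P t + proj_ds (S2 ** P t ** transpose S1))"
    and "\<epsilon> \<ge> 0"
    and "spec_norm (kron S1 S2) \<le> \<epsilon>"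
    and "t \<ge> 1"
  shows "norm (P (t+1) - P t) \<le> (1/2 + \<epsilon>) * norm (P t - P (t-1))"
proof -
  define G where "G X = proj_ds (S2 ** X ** transpose S1)" for X
  have G_lipschitz: "norm (G X - G Y) \<le> \<epsilon> * norm (X - Y)" for X Y
  proof -
    have "norm (G X - G Y) \<le> norm (S2 ** (X - Y) ** transpose S1)"
      unfolding G_def matrix_sandwich_diff[symmetric] by (rule proj_ds_lipschitz)
    also have "\<dots> \<le> spec_norm (kron S1 S2) * norm (X - Y)"
      by (rule norm_sandwich_le_spec_norm_kron)
    also have "\<dots> \<le> \<epsilon> * norm (X - Y)"
      using assms(4) by (simp add: mult_right_mono)
    finally show ?thesis .
  qed
  obtain s where t: "t = Suc s"
    using assms(5) by (cases t) auto
  have "norm (P (Suc (Suc s)) - P (Suc s)) \<le> (1 + \<epsilon>) / 2 * norm (P (Suc s) - P s)"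
    unfolding assms(2)[of "Suc s"] assms(2)[of s] G_def[symmetric]
    by (rule averaged_map_lipschitz[OF G_lipschitz])
  also have "\<dots> \<le> (1/2 + \<epsilon>) * norm (P (Suc s) - P s)"
    using assms(3) by (intro mult_right_mono) auto
  finally show ?thesis
    using t by simp
qed

end
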